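(* Let $X_1,\dots,X_r$ be independent random vectors in $\mathbb{R}^n$, and let $X$ be their coordinate-wise median (i.e. $X_j=\operatorname{median}_{i\in[r]}(X_i)_j$ for each coordinate $j$). Let $C>0$ and $p\ge 0$. If $\Pr[\|X_i\|_2<C]\ge 1-p$ for each $i$, then \[ \Pr[\|X\|_2<C\sqrt{3}]\ge 1-(11p)^{r/4}. \]
   Context: For even $r$ the median is the average of the two middle values. *)

theory Defs
  imports "HOL-Probability.Probability"
begin

definition median :: "real list \<Rightarrow> real" where
  "median xs = (let ys = sort xs; m = length xs div 2 in
     if odd (length xs) then ys ! m else (ys ! (m - 1) + ys ! m) / 2)"

definition coord_median :: "(nat \<Rightarrow> 'a \<Rightarrow> real ^ 'n) \<Rightarrow> nat \<Rightarrow> 'a \<Rightarrow> real ^ 'n" where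
  "coord_median X r \<omega> = (\<chi> j. median (map (\<lambda>i. X i \<omega> $ j) [0..<r]))"

end

theory Submission
  imports Defs
begin

text \<open>If fewer than a quarter of the \<open>X\<^sub>i\<close> are long (\<open>\<parallel>X\<^sub>i\<parallel> \<ge> C\<close>), the median is short
  deterministically: in each coordinate at least half of the entries dominate the median in
  absolute value, so summing over coordinates and discarding the long vectors gives
  \<open>(r/2 - b) \<parallel>X\<parallel>\<^sup>2 < (r - b) C\<^sup>2\<close> for \<open>b\<close> long vectors, whence \<open>\<parallel>X\<parallel>\<^sup>2 < 3 C\<^sup>2\<close>.
  Otherwise some \<open>k = \<lceil>r/4\<rceil>\<close> of the independent events \<open>\<parallel>X\<^sub>i\<parallel> \<ge> C\<close> occur together, which by a
  union bound has probability at most \<open>(r choose k) p\<^sup>k \<le> (4 e p)\<^sup>k \<le> (11 p)\<^bsup>r/4\<^esup>\<close>.\<close>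

lemma sorted_nth_le_iff_card:
  fixes ys :: "'a::linorder list"
  assumes "sorted ys" and "m < length ys"
  shows "ys ! m \<le> t \<longleftrightarrow> Suc m \<le> card {i. i < length ys \<and> ys ! i \<le> t}"
proof
  assume "ys ! m \<le> t"
  then have "{..m} \<subseteq> {i. i < length ys \<and> ys ! i \<le> t}"
    using assms by (auto intro: order_trans[OF sorted_nth_mono])
  from card_mono[OF _ this] show "Suc m \<le> card {i. i < length ys \<and> ys ! i \<le> t}" by simp
next
  assume card_le: "Suc m \<le> card {i. i < length ys \<and> ys ! i \<le> t}"
  show "ys ! m \<le> t"
  proof (rule ccontr)
    assume "\<not> ys ! m \<le> t"
    then have "{i. i < length ys \<and> ys ! i \<le> t} \<subseteq> {..<m}"
      using assms(1) by (auto simp: not_le) (metis not_le order.strict_trans2 sorted_nth_mono)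
    from card_mono[OF _ this] card_le show False by simp
  qed
qed

lemma card_sort_nth:
  "card {i. i < length (sort xs) \<and> P (sort xs ! i)} = card {i. i < length xs \<and> P (xs ! i)}"
  by (metis length_filter_conv_card mset_filter mset_sort size_mset)

lemma sort_nth_le_iff_card:
  fixes xs :: "'a::linorder list"
  assumes "m < length xs"
  shows "sort xs ! m \<le> t \<longleftrightarrow> Suc m \<le> card {i. i < length xs \<and> xs ! i \<le> t}"
  using sorted_nth_le_iff_card[of "sort xs" m t] assms card_sort_nth[of xs "\<lambda>x. x \<le> t"] by simp

lemma median_sort: "median (sort xs) = median xs"
  by (simp add: median_def sorted_sort_id)

lemma sorted_median_between:
  fixes ys :: "real list"
  assumes "sorted ys" and "ys \<noteq> []"
  shows "ys ! (length ys - 1 - length ys div 2) \<le> median ys"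
    and "median ys \<le> ys ! (length ys div 2)"
proof -
  define h where "h = length ys div 2"
  have "ys ! (length ys - 1 - h) \<le> median ys \<and> median ys \<le> ys ! h"
  proof (cases "odd (length ys)")
    case True
    then have "length ys - 1 - h = h" unfolding h_def by presburger
    then show ?thesis using True assms(1) unfolding median_def h_def by (simp add: sorted_sort_id)
  next
    case False
    then obtain q where "length ys = 2 * q" by (auto elim: evenE)
    moreover have "length ys \<noteq> 0" using assms(2) by simp
    ultimately have h: "length ys - 1 - h = h - 1" "1 \<le> h" "h < length ys"
      unfolding h_def by simp_all
    have "ys ! (h - 1) \<le> ys ! h" using assms(1) h by (intro sorted_nth_mono) auto
    then show ?thesis using False assms(1) h unfolding median_def h_def by (simp add: sorted_sort_id Let_def)
  qed
  then show "ys ! (length ys - 1 - length ys div 2) \<le> median ys"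
    and "median ys \<le> ys ! (length ys div 2)" unfolding h_def by auto
qed

text \<open>Depending on the sign of the median, the upper or the lower half of the sorted entries
  dominates it in absolute value.\<close>
lemma half_le_card_abs_median_le:
  fixes xs :: "real list"
  assumes "xs \<noteq> []"
  shows "length xs \<le> 2 * card {i. i < length xs \<and> \<bar>median xs\<bar> \<le> \<bar>xs ! i\<bar>}"
proof -
  define ys where "ys = sort xs"
  define n where "n = length xs"
  define h where "h = n div 2"
  define A where "A = {i. i < n \<and> \<bar>median xs\<bar> \<le> \<bar>ys ! i\<bar>}"
  have ys: "sorted ys" "length ys = n" "ys \<noteq> []"
    using assms unfolding ys_def n_def by (simp_all add: sorted_sort_id) (metis length_0_conv length_sort)
  have lower: "ys ! (n - 1 - h) \<le> median xs" and upper: "median xs \<le> ys ! h"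
    using sorted_median_between[OF ys(1,3)] ys(2) unfolding ys_def h_def by (simp_all add: median_sort)
  have "card A = card {i. i < n \<and> \<bar>median xs\<bar> \<le> \<bar>xs ! i\<bar>}"
    using card_sort_nth[of xs "\<lambda>x. \<bar>median xs\<bar> \<le> \<bar>x\<bar>"] unfolding A_def ys_def n_def by simp
  moreover have "n \<le> 2 * card A"
  proof (cases "median xs \<ge> 0")
    case True
    have "{h..<n} \<subseteq> A"
    proof
      fix i assume "i \<in> {h..<n}"
      then have "i < n" "ys ! h \<le> ys ! i" using ys by (auto intro: sorted_nth_mono)
      then show "i \<in> A" using True upper by (auto simp: A_def)
    qed
    from card_mono[OF _ this] show ?thesis by (simp add: A_def h_def)
  next
    case False
    have "{..n - 1 - h} \<subseteq> A"
    proof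
      fix i assume "i \<in> {..n - 1 - h}"
      moreover have "n - 1 - h < n" using ys by (cases n) (auto simp: h_def)
      ultimately have "i < n" "ys ! i \<le> ys ! (n - 1 - h)"
        using ys by (auto intro: sorted_nth_mono)
      then show "i \<in> A" using False lower by (auto simp: A_def)
    qed
    from card_mono[OF _ this] show ?thesis by (simp add: A_def h_def)
  qed
  ultimately show ?thesis unfolding n_def by simp
qed

lemma median_sq_le_sum_sq:
  fixes xs :: "real list"
  assumes "xs \<noteq> []" and "finite B"
  shows "(length xs / 2 - card B) * (median xs)\<^sup>2 \<le> (\<Sum>i\<in>{..<length xs} - B. (xs ! i)\<^sup>2)"
proof -
  define A where "A = {i. i < length xs \<and> \<bar>median xs\<bar> \<le> \<bar>xs ! i\<bar>}"
  have "card A - card B \<le> card (A - B)"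
    using assms(2) by (rule diff_card_le_card_Diff)
  with half_le_card_abs_median_le[OF assms(1)]
  have "length xs / 2 - card B \<le> card (A - B)"
    unfolding A_def by linarith
  then have "(length xs / 2 - card B) * (median xs)\<^sup>2 \<le> (\<Sum>i\<in>A - B. (median xs)\<^sup>2)"
    by (simp add: mult_right_mono)
  also have "\<dots> \<le> (\<Sum>i\<in>A - B. (xs ! i)\<^sup>2)"
    by (intro sum_mono) (auto simp: A_def abs_le_square_iff)
  also have "\<dots> \<le> (\<Sum>i\<in>{..<length xs} - B. (xs ! i)\<^sup>2)"
    by (intro sum_mono2) (auto simp: A_def)
  finally show ?thesis .
qed

lemma norm_sq_vec: "(norm v)\<^sup>2 = (\<Sum>j\<in>UNIV. (v $ j)\<^sup>2)" for v :: "real ^ 'n"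
  by (simp add: norm_vec_def L2_set_def sum_nonneg)

lemma coord_median_norm_sq_le:
  assumes "r \<noteq> 0" and "finite B"
  shows "(r / 2 - card B) * (norm (coord_median X r \<omega>))\<^sup>2 \<le> (\<Sum>i\<in>{..<r} - B. (norm (X i \<omega>))\<^sup>2)"
proof -
  have coord: "(r / 2 - card B) * (coord_median X r \<omega> $ j)\<^sup>2 \<le> (\<Sum>i\<in>{..<r} - B. (X i \<omega> $ j)\<^sup>2)" for j
    using median_sq_le_sum_sq[of "map (\<lambda>i. X i \<omega> $ j) [0..<r]" B] assms
    by (simp add: coord_median_def)
  have "(r / 2 - card B) * (norm (coord_median X r \<omega>))\<^sup>2
      = (\<Sum>j\<in>UNIV. (r / 2 - card B) * (coord_median X r \<omega> $ j)\<^sup>2)"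
    by (simp add: norm_sq_vec sum_distrib_left)
  also have "\<dots> \<le> (\<Sum>j\<in>UNIV. \<Sum>i\<in>{..<r} - B. (X i \<omega> $ j)\<^sup>2)"
    by (intro sum_mono coord)
  also have "\<dots> = (\<Sum>i\<in>{..<r} - B. (norm (X i \<omega>))\<^sup>2)"
    by (simp add: norm_sq_vec sum.swap[of _ "{..<r} - B"])
  finally show ?thesis .
qed

text \<open>The factor \<open>3\<close> comes from \<open>r - b \<le> 3 (r/2 - b)\<close>, which holds exactly when \<open>4 b \<le> r\<close>.\<close>
lemma norm_coord_median_less:
  assumes "r \<noteq> 0" and "C > 0" and "4 * card {i. i < r \<and> C \<le> norm (X i \<omega>)} < r"
  shows "norm (coord_median X r \<omega>) < C * sqrt 3"
proof -
  define B where "B = {i. i < r \<and> C \<le> norm (X i \<omega>)}"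
  define a where "a = r / 2 - card B"
  have B: "finite B" "B \<subseteq> {..<r}" by (auto simp: B_def)
  have "4 * card B < r" using assms(3) by (simp add: B_def)
  moreover have "card ({..<r} - B) = r - card B"
    using B by (simp add: card_Diff_subset)
  ultimately have a: "a > 0" "real (card ({..<r} - B)) \<le> 3 * a" and "card ({..<r} - B) > 0"
    by (auto simp: a_def of_nat_diff)
  have "a * (norm (coord_median X r \<omega>))\<^sup>2 \<le> (\<Sum>i\<in>{..<r} - B. (norm (X i \<omega>))\<^sup>2)"
    using coord_median_norm_sq_le[OF assms(1) B(1)] by (simp add: a_def)
  also have "\<dots> < (\<Sum>i\<in>{..<r} - B. C\<^sup>2)"
  proof (rule sum_strict_mono)
    show "{..<r} - B \<noteq> {}" using \<open>card ({..<r} - B) > 0\<close> by (metis card.empty less_irrefl)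
    show "(norm (X i \<omega>))\<^sup>2 < C\<^sup>2" if "i \<in> {..<r} - B" for i
      using that by (intro power_strict_mono) (auto simp: B_def)
  qed simp
  also have "\<dots> = real (card ({..<r} - B)) * C\<^sup>2"
    by simp
  also have "\<dots> \<le> (3 * a) * C\<^sup>2"
    using a(2) by (intro mult_right_mono) auto
  finally have "(norm (coord_median X r \<omega>))\<^sup>2 < 3 * C\<^sup>2"
    using a(1) by (simp add: mult.assoc mult.left_commute[of 3])
  then have "norm (coord_median X r \<omega>) < sqrt (3 * C\<^sup>2)"
    by (rule real_less_rsqrt)
  then show ?thesis
    using assms(2) by (simp add: real_sqrt_mult mult.commute)
qed

text \<open>The \<open>m\<close>-th order statistic is at most \<open>t\<close> iff more than \<open>m\<close> of the values are,
  which is a measurable count.\<close>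
lemma borel_measurable_sort_nth:
  fixes f :: "nat \<Rightarrow> 'a \<Rightarrow> real"
  assumes f: "\<And>i. i < r \<Longrightarrow> f i \<in> borel_measurable M" and "m < r"
  shows "(\<lambda>\<omega>. sort (map (\<lambda>i. f i \<omega>) [0..<r]) ! m) \<in> borel_measurable M"
  unfolding borel_measurable_iff_le
proof
  fix t
  have "sort (map (\<lambda>i. f i \<omega>) [0..<r]) ! m \<le> t \<longleftrightarrow> real (Suc m) \<le> (\<Sum>i<r. of_bool (f i \<omega> \<le> t))"
    for \<omega>
  proof -
    have "(\<Sum>i<r. of_bool (f i \<omega> \<le> t)) = real (card {i. i < r \<and> f i \<omega> \<le> t})"
      by (simp add: sum_of_bool_eq lessThan_def Collect_conj_eq)
    moreover have "{i. i < r \<and> map (\<lambda>i. f i \<omega>) [0..<r] ! i \<le> t} = {i. i < r \<and> f i \<omega> \<le> t}"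
      by auto
    ultimately show ?thesis
      using sort_nth_le_iff_card[of m "map (\<lambda>i. f i \<omega>) [0..<r]" t] \<open>m < r\<close>
      by (simp del: of_nat_Suc)
  qed
  then have "{\<omega> \<in> space M. sort (map (\<lambda>i. f i \<omega>) [0..<r]) ! m \<le> t}
      = {\<omega> \<in> space M. real (Suc m) \<le> (\<Sum>i<r. of_bool (f i \<omega> \<le> t))}"
    by auto
  also have "\<dots> \<in> sets M"
    using f by measurable
  finally show "{\<omega> \<in> space M. sort (map (\<lambda>i. f i \<omega>) [0..<r]) ! m \<le> t} \<in> sets M" .
qed

lemma borel_measurable_median:
  fixes f :: "nat \<Rightarrow> 'a \<Rightarrow> real"
  assumes "\<And>i. i < r \<Longrightarrow> f i \<in> borel_measurable M"
  shows "(\<lambda>\<omega>. median (map (\<lambda>i. f i \<omega>) [0..<r])) \<in> borel_measurable M"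
proof (cases "r = 0")
  case False
  then have [measurable]:
    "(\<lambda>\<omega>. sort (map (\<lambda>i. f i \<omega>) [0..<r]) ! (r div 2)) \<in> borel_measurable M"
    "(\<lambda>\<omega>. sort (map (\<lambda>i. f i \<omega>) [0..<r]) ! (r div 2 - 1)) \<in> borel_measurable M"
    using borel_measurable_sort_nth[OF assms] by auto
  show ?thesis
    unfolding median_def by (simp add: Let_def)
qed (simp add: median_def)

lemma borel_measurable_coord_median:
  fixes X :: "nat \<Rightarrow> 'a \<Rightarrow> real ^ 'n"
  assumes "\<And>i. i < r \<Longrightarrow> X i \<in> borel_measurable M"
  shows "coord_median X r \<in> borel_measurable M"
proof -
  have "(\<lambda>\<omega>. coord_median X r \<omega> $ j) \<in> borel_measurable M" for j
    unfolding coord_median_def vec_lambda_beta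
  proof (rule borel_measurable_median)
    fix i assume "i < r"
    show "(\<lambda>\<omega>. X i \<omega> $ j) \<in> borel_measurable M"
      by (rule borel_measurable_continuous_on[OF _ assms[OF \<open>i < r\<close>]]) (intro continuous_intros)
  qed
  then show ?thesis
    by (subst borel_measurable_euclidean_space) (auto simp: Basis_vec_def inner_axis)
qed

lemma power_div_fact_le_exp:
  fixes x :: real
  assumes "0 \<le> x"
  shows "x ^ n / fact n \<le> exp x"
proof -
  have terms: "(\<lambda>i. x ^ i / fact i) sums exp x"
    using exp_converges[of x] by (simp add: divide_inverse mult.commute)
  have "(\<Sum>i\<in>{n}. x ^ i / fact i) \<le> (\<Sum>i. x ^ i / fact i)"
    using terms assms by (intro sum_le_suminf) (auto simp: sums_iff)
  then show ?thesis
    using terms by (simp add: sums_iff)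
qed

lemma binomial_le_exp_pow:
  assumes "0 < k"
  shows "real (n choose k) \<le> (exp 1 * real n / real k) ^ k"
proof -
  have "real (n choose k) * fact k \<le> real n ^ k"
    by (metis binomial_fact_pow of_nat_fact of_nat_le_iff of_nat_mult of_nat_power)
  then have "real (n choose k) \<le> real n ^ k / fact k"
    by (simp add: field_simps)
  also have "\<dots> = (real n / real k) ^ k * (real k ^ k / fact k)"
    using assms by (simp add: power_divide)
  also have "\<dots> \<le> (real n / real k) ^ k * exp (real k)"
    by (intro mult_left_mono power_div_fact_le_exp) auto
  also have "exp (real k) = exp 1 ^ k"
    by (simp add: exp_of_nat_mult[symmetric])
  finally show ?thesis
    by (simp add: power_mult_distrib[symmetric] mult.commute)
qed

lemma binomial_le_11_pow:
  assumes "r \<le> 4 * k"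
  shows "real (r choose k) \<le> 11 ^ k"
proof (cases "k = 0")
  case False
  have "real (r choose k) \<le> (exp 1 * real r / real k) ^ k"
    using False by (intro binomial_le_exp_pow) simp
  also have "\<dots> \<le> 11 ^ k"
  proof (rule power_mono)
    have "exp 1 * real r \<le> (272 / 100) * (4 * real k)"
      using e_less_272 assms by (intro mult_mono) auto
    then show "exp 1 * real r / real k \<le> 11"
      using False by (simp add: divide_simps)
  qed simp
  finally show ?thesis .
qed simp

lemma binomial_mult_pow_le_powr:
  fixes p :: real
  assumes "0 \<le> p" and "11 * p < 1" and "k \<noteq> 0" and "r \<le> 4 * k"
  shows "real (r choose k) * p ^ k \<le> (11 * p) powr (real r / 4)"
proof (cases "p = 0")
  case False
  have "real (r choose k) * p ^ k \<le> 11 ^ k * p ^ k"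
    using binomial_le_11_pow[OF assms(4)] assms(1) by (intro mult_right_mono) auto
  also have "\<dots> = (11 * p) powr real k"
    using assms(1) False by (simp add: powr_realpow power_mult_distrib)
  also have "\<dots> \<le> (11 * p) powr (real r / 4)"
    using assms False by (intro powr_mono') auto
  finally show ?thesis .
qed (use assms(3) in \<open>simp add: zero_power\<close>)

lemma card_occurring_ge_eq_Union:
  assumes "finite I" and "k \<noteq> 0" and "\<And>i. i \<in> I \<Longrightarrow> E i \<subseteq> \<Omega>"
  shows "{\<omega> \<in> \<Omega>. k \<le> card {i \<in> I. \<omega> \<in> E i}} = (\<Union>S\<in>{S. S \<subseteq> I \<and> card S = k}. \<Inter>i\<in>S. E i)"
proof safe
  fix \<omega> assume "\<omega> \<in> \<Omega>" "k \<le> card {i \<in> I. \<omega> \<in> E i}"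
  then obtain S where "S \<subseteq> {i \<in> I. \<omega> \<in> E i}" "card S = k"
    by (meson obtain_subset_with_card_n)
  then show "\<omega> \<in> (\<Union>S\<in>{S. S \<subseteq> I \<and> card S = k}. \<Inter>i\<in>S. E i)" by auto
next
  fix \<omega> S assume S: "S \<subseteq> I" "k = card S" and "\<omega> \<in> (\<Inter>i\<in>S. E i)"
  then have "S \<noteq> {}" "S \<subseteq> {i \<in> I. \<omega> \<in> E i}" using assms(2) by auto
  then show "\<omega> \<in> \<Omega>" and "card S \<le> card {i \<in> I. \<omega> \<in> E i}"
    using assms(1,3) by (auto intro: card_mono)
qed

lemma (in prob_space) prob_card_occurring_ge_le:
  assumes indep: "indep_events E I" and "finite I" and "k \<noteq> 0"
    and le_p: "\<And>i. i \<in> I \<Longrightarrow> prob (E i) \<le> p"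
  shows "{\<omega> \<in> space M. k \<le> card {i \<in> I. \<omega> \<in> E i}} \<in> events"
    and "prob {\<omega> \<in> space M. k \<le> card {i \<in> I. \<omega> \<in> E i}} \<le> real (card I choose k) * p ^ k"
proof -
  define K where "K = {S. S \<subseteq> I \<and> card S = k}"
  have K: "finite K" "\<And>S. S \<in> K \<Longrightarrow> finite S \<and> S \<noteq> {} \<and> S \<subseteq> I"
    using \<open>finite I\<close> \<open>k \<noteq> 0\<close> by (auto simp: K_def intro: finite_subset)
  have events: "E ` I \<subseteq> events"
    using indep by (simp add: indep_events_def)
  have eq: "{\<omega> \<in> space M. k \<le> card {i \<in> I. \<omega> \<in> E i}} = (\<Union>S\<in>K. \<Inter>i\<in>S. E i)"
    unfolding K_def using \<open>finite I\<close> \<open>k \<noteq> 0\<close> events sets.sets_into_space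
    by (intro card_occurring_ge_eq_Union) auto
  have K_events: "(\<Inter>i\<in>S. E i) \<in> events" if "S \<in> K" for S
    using K(2)[OF that] events by (intro sets.finite_INT) auto
  then show "{\<omega> \<in> space M. k \<le> card {i \<in> I. \<omega> \<in> E i}} \<in> events"
    unfolding eq using K(1) by (intro sets.finite_UN) auto
  have "prob (\<Union>S\<in>K. \<Inter>i\<in>S. E i) \<le> (\<Sum>S\<in>K. prob (\<Inter>i\<in>S. E i))"
    using K(1) K_events by (intro finite_measure_subadditive_finite) auto
  also have "\<dots> = (\<Sum>S\<in>K. \<Prod>i\<in>S. prob (E i))"
    using K indep by (intro sum.cong refl) (auto simp: indep_events_def)
  also have "\<dots> \<le> (\<Sum>S\<in>K. p ^ k)"
  proof (rule sum_mono)
    fix S assume "S \<in> K"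
    then have "(\<Prod>i\<in>S. prob (E i)) \<le> (\<Prod>i\<in>S. p)"
      using K le_p by (intro prod_mono) auto
    then show "(\<Prod>i\<in>S. prob (E i)) \<le> p ^ k"
      using \<open>S \<in> K\<close> by (simp add: K_def)
  qed
  also have "\<dots> = real (card I choose k) * p ^ k"
    using n_subsets[OF \<open>finite I\<close>, of k] by (simp add: K_def)
  finally show "prob {\<omega> \<in> space M. k \<le> card {i \<in> I. \<omega> \<in> E i}} \<le> real (card I choose k) * p ^ k"
    unfolding eq .
qed

lemma (in prob_space) prob_norm_coord_median_less_ge:
  fixes X :: "nat \<Rightarrow> 'a \<Rightarrow> real ^ 'n"
  assumes "r \<noteq> 0" and "C > 0"
    and X: "\<And>i. i < r \<Longrightarrow> X i \<in> borel_measurable M"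
    and "indep_vars (\<lambda>_. borel) X {0..<r}"
    and short: "\<And>i. i < r \<Longrightarrow> 1 - p \<le> prob {\<omega> \<in> space M. norm (X i \<omega>) < C}"
    and "k \<noteq> 0" and "4 * k \<le> r + 3"
  shows "1 - real (r choose k) * p ^ k \<le> prob {\<omega> \<in> space M. norm (coord_median X r \<omega>) < C * sqrt 3}"
proof -
  define good where "good = {\<omega> \<in> space M. norm (coord_median X r \<omega>) < C * sqrt 3}"
  define E where "E i = {\<omega> \<in> space M. C \<le> norm (X i \<omega>)}" for i
  define many_long where "many_long = {\<omega> \<in> space M. k \<le> card {i \<in> {0..<r}. \<omega> \<in> E i}}"
  have indep: "indep_events E {0..<r}"
    unfolding E_def using assms(4) by (rule indep_eventsI_indep_vars) simp
  have "prob (E i) \<le> p" if "i \<in> {0..<r}" for i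
  proof -
    have [measurable]: "X i \<in> borel_measurable M"
      using that by (simp add: X)
    have "E i = space M - {\<omega> \<in> space M. norm (X i \<omega>) < C}"
      by (auto simp: E_def)
    then have "prob (E i) = 1 - prob {\<omega> \<in> space M. norm (X i \<omega>) < C}"
      by (simp add: prob_compl)
    then show ?thesis
      using short[of i] that by simp
  qed
  note prob_card_occurring_ge_le[OF indep finite_atLeastLessThan \<open>k \<noteq> 0\<close> this]
  then have many_long: "many_long \<in> events" "prob many_long \<le> real (r choose k) * p ^ k"
    unfolding many_long_def card_atLeastLessThan diff_zero by blast+
  have "space M - good \<subseteq> many_long"
  proof
    fix \<omega> assume \<omega>: "\<omega> \<in> space M - good"
    then have "\<not> 4 * card {i. i < r \<and> C \<le> norm (X i \<omega>)} < r"
      using norm_coord_median_less[of r C X \<omega>] assms(1,2) by (auto simp: good_def)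
    moreover have "{i \<in> {0..<r}. \<omega> \<in> E i} = {i. i < r \<and> C \<le> norm (X i \<omega>)}"
      using \<omega> by (auto simp: E_def)
    ultimately show "\<omega> \<in> many_long"
      using \<omega> \<open>4 * k \<le> r + 3\<close> by (simp add: many_long_def)
  qed
  then have "prob (space M - good) \<le> prob many_long"
    using many_long(1) by (rule finite_measure_mono)
  moreover have "good \<in> events"
    using borel_measurable_coord_median[OF X] unfolding good_def by measurable
  ultimately show ?thesis
    using many_long(2) prob_compl unfolding good_def by simp
qed

theorem lemma6p2:
  fixes M :: "'a measure" and X :: "nat \<Rightarrow> 'a \<Rightarrow> real ^ 'n"
    and r :: nat and C p :: real
  assumes "prob_space M"
    and "r \<ge> 1"
    and "\<And>i. i < r \<Longrightarrow> X i \<in> borel_measurable M"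
    and "prob_space.indep_vars M (\<lambda>_. borel) X {0..<r}"
    and "C > 0" and "p \<ge> 0"
    and "\<And>i. i < r \<Longrightarrow> measure M {\<omega> \<in> space M. norm (X i \<omega>) < C} \<ge> 1 - p"
  shows "measure M {\<omega> \<in> space M. norm (coord_median X r \<omega>) < C * sqrt 3}
           \<ge> 1 - (11 * p) powr (real r / 4)"
proof -
  interpret prob_space M by fact
  define k where "k = (r + 3) div 4"
  have k: "k \<noteq> 0" "r \<le> 4 * k" "4 * k \<le> r + 3"
    using assms(2) by (auto simp: k_def)
  have bound: "1 - real (r choose k) * p ^ k \<le> prob {\<omega> \<in> space M. norm (coord_median X r \<omega>) < C * sqrt 3}"
    using assms(2-5,7) k(1,3) by (intro prob_norm_coord_median_less_ge) auto
  show ?thesis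
  proof (cases "11 * p < 1")
    case True
    then show ?thesis
      using binomial_mult_pow_le_powr[OF assms(6) True k(1,2)] bound by linarith
  next
    case False
    then have "1 \<le> (11 * p) powr (real r / 4)"
      by (intro ge_one_powr_ge_zero) auto
    then show ?thesis
      using measure_nonneg by (smt (verit))
  qed
qed

end
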